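(* $\mathbf{M}=\boldsymbol{G}_N\mathbf{P}^t$.
   Context: Let $m\ge1$, $N=2^m$, $\mathbf{R}_m=\mathbb{F}_2[x_0,\dots,x_{m-1}]/(x_0^2-x_0,\dots,x_{m-1}^2-x_{m-1})$, and $\operatorname{ev}(Q)$ the evaluation vector of $Q\in\mathbf{R}_m$ at all points of $\mathbb{F}_2^m$. Let $\boldsymbol{G}_N=\begin{pmatrix}1&0\\1&1\end{pmatrix}^{\otimes m}$; row $i$ of $\boldsymbol{G}_N$ is $\operatorname{ev}$ of the monomial $x_0^{b_0}\cdots x_{m-1}^{b_{m-1}}$ with $(b_0,\dots,b_{m-1})$ the binary expansion of $2^m-1-i$. Let $\mathbf{P}\in\mathbb{F}_2^{N\times N}$ be upper triangular with ones on the diagonal (so $\mathcal{C}_{\mathbf{P}\boldsymbol{G}_N}(\mathcal{A})$, spanned by rows of $\mathbf{P}\boldsymbol{G}_N$ indexed by $\mathcal{A}$, is an upper polynomial polar code). For a monomial $h$, let $\check{h}=x_0\cdots x_{m-1}/h$ be its multiplicative complement; divisibility $f\mid g$ means the set of variables of $f$ is contained in that of $g$; $\operatorname{terms}(Q)$ is the set of monomials appearing in $Q$. The matrix $\mathbf{M}$ is defined by $M_{i,j}=|\{g\in\operatorname{terms}(P_j)\mid \check{g}\mid \check{f}\}| \pmod 2$, where $\operatorname{ev}(P_j)$ is row $j$ of $\mathbf{P}\boldsymbol{G}_N$ and $\operatorname{ev}(f)$ is row $i$ of $\boldsymbol{G}_N$. *)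

theory Defs
  imports "Jordan_Normal_Form.Matrix" "HOL-Library.Z2"
begin

(* A monomial of R_m is identified with the
   set of variable indices occurring in it (a subset of {..<m}); an element Q of R_m
   (multilinear polynomial over F_2) is identified with its set of terms terms(Q). *)

definition monoms :: "nat \<Rightarrow> nat set set" where
  "monoms m = {g. g \<subseteq> {..<m}}"

definition mon_of_row :: "nat \<Rightarrow> nat \<Rightarrow> nat set" where
  "mon_of_row m i = {k. k < m \<and> bit (2^m - 1 - i) k}"

(* the point of F_2^m attached to column c (x_k = 1 iff k in the set) *)
definition point_of_col :: "nat \<Rightarrow> nat \<Rightarrow> nat set" where
  "point_of_col m c = {k. k < m \<and> bit (2^m - 1 - c) k}"

definition evp :: "nat \<Rightarrow> nat set set \<Rightarrow> nat \<Rightarrow> bit" where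
  "evp m Q c = of_nat (card {g \<in> Q. g \<subseteq> point_of_col m c})"

definition GN :: "nat \<Rightarrow> bit mat" where
  "GN m = mat (2^m) (2^m) (\<lambda>(i,c). evp m {mon_of_row m i} c)"

definition upper_unitri :: "nat \<Rightarrow> bit mat \<Rightarrow> bool" where
  "upper_unitri n P \<longleftrightarrow> P \<in> carrier_mat n n \<and>
     (\<forall>i<n. \<forall>j<n. j < i \<longrightarrow> P $$ (i,j) = 0) \<and> (\<forall>i<n. P $$ (i,i) = 1)"

definition terms_row :: "nat \<Rightarrow> bit mat \<Rightarrow> nat \<Rightarrow> nat set set" where
  "terms_row m P j = (THE Q. Q \<subseteq> monoms m \<and>
      (\<forall>c < 2^m. evp m Q c = (P * GN m) $$ (j, c)))"

definition mcompl :: "nat \<Rightarrow> nat set \<Rightarrow> nat set" where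
  "mcompl m h = {..<m} - h"

definition mdvd :: "nat set \<Rightarrow> nat set \<Rightarrow> bool" where
  "mdvd f g \<longleftrightarrow> f \<subseteq> g"

definition Mmat :: "nat \<Rightarrow> bit mat \<Rightarrow> bit mat" where
  "Mmat m P = mat (2^m) (2^m) (\<lambda>(i,j).
     of_nat (card {g \<in> terms_row m P j. mdvd (mcompl m g) (mcompl m (mon_of_row m i))}))"

end

theory Submission
  imports Defs
begin

(* Row j of P G_N is the sum of the rows k of G_N with P_jk = 1, i.e. the evaluation of the
   polynomial whose terms are the monomials attached to these k.  Evaluation is injective on
   R_m: a term that is minimal in the symmetric difference of two term sets is detected by
   evaluating at its own indicator point.  Hence terms(P_j) is exactly that set of monomials.
   Since the complement of g divides the complement of f iff f divides g, which is the
   entry (i,k) of G_N, the entry M_ij counts mod 2 the k with P_jk = 1 and (G_N)_ik = 1,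
   which is the entry (i,j) of G_N P^t. *)

lemma card_filter_image:
  assumes "inj_on f A"
  shows "card {y \<in> f ` A. R y} = card {x \<in> A. R (f x)}"
proof -
  have "{y \<in> f ` A. R y} = f ` {x \<in> A. R (f x)}" by auto
  moreover have "inj_on f {x \<in> A. R (f x)}" using assms by (rule inj_on_subset) auto
  ultimately show ?thesis by (simp add: card_image)
qed

lemma family_eq_if_parity_of_subsets_eq:
  fixes Q1 Q2 :: "'a set set"
  assumes "finite Q1" "finite Q2"
    and parity: "\<And>p. p \<in> Q1 \<union> Q2 \<Longrightarrow>
      even (card {g \<in> Q1. g \<subseteq> p}) = even (card {g \<in> Q2. g \<subseteq> p})"
  shows "Q1 = Q2"
proof (rule ccontr)
  assume "Q1 \<noteq> Q2"
  then have "finite ((Q1 - Q2) \<union> (Q2 - Q1))" "(Q1 - Q2) \<union> (Q2 - Q1) \<noteq> {}"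
    using assms(1,2) by auto
  then obtain g0 where g0: "g0 \<in> (Q1 - Q2) \<union> (Q2 - Q1)"
    and minimal: "\<And>g. g \<in> (Q1 - Q2) \<union> (Q2 - Q1) \<Longrightarrow> g \<subseteq> g0 \<Longrightarrow> g = g0"
    using finite_has_minimal by metis
  define A1 where "A1 = {g \<in> Q1. g \<subseteq> g0}"
  define A2 where "A2 = {g \<in> Q2. g \<subseteq> g0}"
  have "finite A1" "finite A2" using assms(1,2) unfolding A1_def A2_def by auto
  have "A1 = insert g0 A2 \<and> g0 \<notin> A2 \<or> A2 = insert g0 A1 \<and> g0 \<notin> A1"
    using g0 minimal unfolding A1_def A2_def by blast
  then have "odd (card A1 + card A2)"
    using \<open>finite A1\<close> \<open>finite A2\<close> by auto
  moreover have "even (card A1) = even (card A2)"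
    using parity g0 unfolding A1_def A2_def by blast
  ultimately show False by simp
qed

lemma mon_of_row_subset: "mon_of_row m i \<subseteq> {..<m}"
  unfolding mon_of_row_def by auto

lemma inj_on_mon_of_row: "inj_on (mon_of_row m) {..<2^m}"
proof (rule inj_onI)
  fix i i' :: nat
  assume "i \<in> {..<2^m}" "i' \<in> {..<2^m}" and eq: "mon_of_row m i = mon_of_row m i'"
  have "bit (2^m - 1 - i) k = bit (2^m - 1 - i') k" for k
  proof (cases "k < m")
    case True
    then show ?thesis using eq unfolding mon_of_row_def by blast
  next
    case False
    have "\<not> bit n k" if "n < 2^m" for n :: nat
      using False that by (metis bit_take_bit_iff take_bit_nat_eq_self)
    then show ?thesis by simp
  qed
  then have "2^m - 1 - i = 2^m - 1 - i'" by (simp add: bit_eq_iff)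
  then show "i = i'" using \<open>i \<in> {..<2^m}\<close> \<open>i' \<in> {..<2^m}\<close> by auto
qed

lemma mon_of_row_image: "mon_of_row m ` {..<2^m} = Pow {..<m}"
proof (rule card_subset_eq)
  show "mon_of_row m ` {..<2^m} \<subseteq> Pow {..<m}" using mon_of_row_subset by auto
  show "card (mon_of_row m ` {..<2^m}) = card (Pow {..<m})"
    by (simp add: card_image[OF inj_on_mon_of_row] card_Pow)
qed simp

lemma evp_eq_card: "evp m Q c = of_nat (card {g \<in> Q. g \<subseteq> mon_of_row m c})"
  unfolding evp_def point_of_col_def mon_of_row_def ..

lemma evp_inj:
  assumes "Q1 \<subseteq> monoms m" "Q2 \<subseteq> monoms m"
    and "\<And>c. c < 2^m \<Longrightarrow> evp m Q1 c = evp m Q2 c"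
  shows "Q1 = Q2"
proof (rule family_eq_if_parity_of_subsets_eq)
  have "monoms m = Pow {..<m}" unfolding monoms_def by auto
  then have "Q1 \<subseteq> Pow {..<m}" "Q2 \<subseteq> Pow {..<m}" using assms(1,2) by auto
  then show "finite Q1" "finite Q2" by (simp_all add: finite_subset)
  fix p assume "p \<in> Q1 \<union> Q2"
  then have "p \<in> mon_of_row m ` {..<2^m}"
    using \<open>Q1 \<subseteq> Pow {..<m}\<close> \<open>Q2 \<subseteq> Pow {..<m}\<close> by (auto simp: mon_of_row_image)
  then obtain c where "c < 2^m" "p = mon_of_row m c" by auto
  then have "(of_nat (card {g \<in> Q1. g \<subseteq> p}) :: bit) = of_nat (card {g \<in> Q2. g \<subseteq> p})"
    using assms(3) by (simp add: evp_eq_card)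
  then show "even (card {g \<in> Q1. g \<subseteq> p}) = even (card {g \<in> Q2. g \<subseteq> p})"
    using Z2.bit_eq_iff even_of_nat by blast
qed

lemma evp_singleton: "evp m {f} c = of_bool (f \<subseteq> mon_of_row m c)"
proof -
  have "{g \<in> {f}. g \<subseteq> mon_of_row m c} = (if f \<subseteq> mon_of_row m c then {f} else {})"
    by auto
  then show ?thesis by (simp add: evp_eq_card)
qed

lemma dim_GN [simp]: "dim_row (GN m) = 2^m" "dim_col (GN m) = 2^m"
  unfolding GN_def by simp_all

lemma GN_entry:
  assumes "i < 2^m" "c < 2^m"
  shows "GN m $$ (i, c) = of_bool (mon_of_row m i \<subseteq> mon_of_row m c)"
  using assms unfolding GN_def by (simp add: evp_singleton)

lemma sum_bit_times_of_bool:
  fixes f :: "'a \<Rightarrow> bit"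
  assumes "finite A"
  shows "(\<Sum>x\<in>A. f x * of_bool (R x)) = of_nat (card {x \<in> A. f x = 1 \<and> R x})"
proof -
  have "f x * of_bool (R x) = of_bool (f x = 1 \<and> R x)" for x
    by (cases "f x") auto
  then show ?thesis using assms by (simp add: Int_def)
qed

definition row_monoms :: "nat \<Rightarrow> bit mat \<Rightarrow> nat \<Rightarrow> nat set set" where
  "row_monoms m P j = mon_of_row m ` {k. k < 2^m \<and> P $$ (j, k) = 1}"

lemma row_monoms_subset: "row_monoms m P j \<subseteq> monoms m"
  unfolding row_monoms_def monoms_def using mon_of_row_subset by blast

lemma card_row_monoms_filter:
  "card {g \<in> row_monoms m P j. R g} = card {k. k < 2^m \<and> P $$ (j, k) = 1 \<and> R (mon_of_row m k)}"
proof -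
  have "inj_on (mon_of_row m) {k. k < 2^m \<and> P $$ (j, k) = 1}"
    by (rule inj_on_subset[OF inj_on_mon_of_row]) auto
  then show ?thesis unfolding row_monoms_def by (simp add: card_filter_image conj_assoc)
qed

lemma times_GN_entry:
  assumes "P \<in> carrier_mat (2^m) (2^m)" "j < 2^m" "c < 2^m"
  shows "(P * GN m) $$ (j, c) = evp m (row_monoms m P j) c"
proof -
  have "(P * GN m) $$ (j, c) = (\<Sum>k<2^m. P $$ (j, k) * GN m $$ (k, c))"
    using assms by (simp add: scalar_prod_def atLeast0LessThan)
  also have "\<dots> = (\<Sum>k<2^m. P $$ (j, k) * of_bool (mon_of_row m k \<subseteq> mon_of_row m c))"
    using assms(3) by (simp add: GN_entry)
  also have "\<dots> = evp m (row_monoms m P j) c"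
    unfolding sum_bit_times_of_bool[OF finite_lessThan]
    by (simp add: evp_eq_card card_row_monoms_filter)
  finally show ?thesis .
qed

lemma terms_row_eq_row_monoms:
  assumes "P \<in> carrier_mat (2^m) (2^m)" "j < 2^m"
  shows "terms_row m P j = row_monoms m P j"
  unfolding terms_row_def
proof (rule the_equality)
  show "row_monoms m P j \<subseteq> monoms m \<and>
      (\<forall>c<2^m. evp m (row_monoms m P j) c = (P * GN m) $$ (j, c))"
    using row_monoms_subset times_GN_entry[OF assms] by simp
next
  fix Q assume "Q \<subseteq> monoms m \<and> (\<forall>c<2^m. evp m Q c = (P * GN m) $$ (j, c))"
  then show "Q = row_monoms m P j"
    using row_monoms_subset times_GN_entry[OF assms] by (intro evp_inj[of Q m]) auto
qed

lemma mdvd_mcompl_iff_subset: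
  assumes "f \<subseteq> {..<m}" "g \<subseteq> {..<m}"
  shows "mdvd (mcompl m g) (mcompl m f) \<longleftrightarrow> f \<subseteq> g"
  using assms unfolding mdvd_def mcompl_def by auto

lemma Mmat_eq_GN_times_transpose:
  assumes P: "P \<in> carrier_mat (2^m) (2^m)"
  shows "Mmat m P = GN m * transpose_mat P"
proof (rule eq_matI)
  fix i j assume "i < dim_row (GN m * transpose_mat P)" "j < dim_col (GN m * transpose_mat P)"
  then have i: "i < 2^m" and j: "j < 2^m" using P by auto
  have "Mmat m P $$ (i, j) =
      of_nat (card {k. k < 2^m \<and> P $$ (j, k) = 1 \<and> mon_of_row m i \<subseteq> mon_of_row m k})"
    using i j mon_of_row_subset
    by (simp add: Mmat_def terms_row_eq_row_monoms[OF P j] mdvd_mcompl_iff_subset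
        card_row_monoms_filter)
  also have "\<dots> = (\<Sum>k<2^m. P $$ (j, k) * of_bool (mon_of_row m i \<subseteq> mon_of_row m k))"
    unfolding sum_bit_times_of_bool[OF finite_lessThan] by simp
  also have "\<dots> = (GN m * transpose_mat P) $$ (i, j)"
    using P i j by (simp add: scalar_prod_def atLeast0LessThan GN_entry mult.commute conj_commute)
  finally show "Mmat m P $$ (i, j) = (GN m * transpose_mat P) $$ (i, j)" .
qed (use P in \<open>simp_all add: Mmat_def\<close>)

theorem proposition3:
  fixes m :: nat and P :: "bit mat"
  assumes "m \<ge> 1"
    and "upper_unitri (2^m) P"
  shows "Mmat m P = GN m * transpose_mat P"
  using assms(2) unfolding upper_unitri_def by (intro Mmat_eq_GN_times_transpose) simp

end
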